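(* Let $N$ be a network (an unrooted, binary, level-1, semi-directed phylogenetic network, as defined in the context) with at least four leaves. Then $N$ contains an out leaf or a tree cherry.
   Context: A network is a finite connected graph with no self-loops or multiple edges, whose degree-1 vertices are the leaves (labelled by a leaf set $X$) and whose other vertices all have degree 3 (binary). Some edges are directed: a reticulation vertex is a vertex with exactly two incoming directed edges (its reticulation edges) and one further incident edge (its out edge), which is left undirected; the only directed edges are reticulation edges (semi-directed). The network is phylogenetic: there is a valid root location, i.e. an edge that can be subdivided by a new root vertex $\rho$ so that orienting every undirected edge away from $\rho$ gives an orientation consistent with the given directions of all reticulation edges (so every non-root vertex has in-degree 1 and out-degree 2, except reticulation vertices, which have in-degree 2 and out-degree 1). The network is level-1: every biconnected component contains at most one reticulation vertex. An out leaf is a leaf incident to the out edge of a reticulation vertex. A tree cherry is a subgraph consisting of a vertex $v$ and two leaves adjacent to $v$, which is separated from the rest of the network by deleting a cut edge incident to $v$ (a cut edge is an edge whose removal disconnects the graph). *)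

theory Defs
  imports Main
begin

text \<open>A network is given by a vertex set V, an (undirected) edge set E of
  2-element vertex sets, and a set A of directed (reticulation) edges; every
  element of A is an orientation of an edge of E.  Undirected edges are the
  edges of E not oriented by A.\<close>

definition adj :: "'a set set \<Rightarrow> ('a \<times> 'a) set" where
  "adj E = {(u, v). {u, v} \<in> E}"

definition simple_graph :: "'a set \<Rightarrow> 'a set set \<Rightarrow> bool" where
  "simple_graph V E \<longleftrightarrow> finite V \<and> (\<forall>e\<in>E. e \<subseteq> V \<and> card e = 2)"

definition graph_connected :: "'a set \<Rightarrow> 'a set set \<Rightarrow> bool" where
  "graph_connected V E \<longleftrightarrow> (\<forall>u\<in>V. \<forall>v\<in>V. (u, v) \<in> (adj E)\<^sup>*)"

definition deg :: "'a set set \<Rightarrow> 'a \<Rightarrow> nat" where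
  "deg E v = card {e \<in> E. v \<in> e}"

definition leaves :: "'a set \<Rightarrow> 'a set set \<Rightarrow> 'a set" where
  "leaves V E = {v \<in> V. deg E v = 1}"

definition indeg :: "('a \<times> 'a) set \<Rightarrow> 'a \<Rightarrow> nat" where
  "indeg D v = card {u. (u, v) \<in> D}"

definition is_retic :: "('a \<times> 'a) set \<Rightarrow> 'a \<Rightarrow> bool" where
  "is_retic A v \<longleftrightarrow> indeg A v = 2"

definition semi_directed :: "'a set set \<Rightarrow> ('a \<times> 'a) set \<Rightarrow> bool" where
  "semi_directed E A \<longleftrightarrow>
     A \<subseteq> adj E \<and> (\<forall>(u, v)\<in>A. (v, u) \<notin> A) \<and>
     (\<forall>(u, v)\<in>A. is_retic A v \<and> (\<forall>w. (v, w) \<notin> A))"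

text \<open>Valid root location e0: subdividing e0 by a root and orienting every
  undirected edge away from the root yields a rooted (acyclic) network,
  consistent with A, in which reticulations have in-degree 2 and all other
  non-root vertices in-degree 1.  The orientation of the edges other than e0
  is D; the two root arcs contribute in-degree 1 to the endpoints of e0.\<close>
definition valid_root_location ::
  "'a set \<Rightarrow> 'a set set \<Rightarrow> ('a \<times> 'a) set \<Rightarrow> 'a set \<Rightarrow> bool" where
  "valid_root_location V E A e0 \<longleftrightarrow> e0 \<in> E \<and>
     (\<exists>D. D \<subseteq> adj (E - {e0}) \<and>
          (\<forall>e\<in>E - {e0}. \<exists>u v. e = {u, v} \<and> (u, v) \<in> D) \<and>
          acyclic D \<and> A \<subseteq> D \<and>
          (\<forall>v\<in>V. indeg D v + (if v \<in> e0 then 1 else 0)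
                   = (if is_retic A v then 2 else 1)))"

definition phylogenetic :: "'a set \<Rightarrow> 'a set set \<Rightarrow> ('a \<times> 'a) set \<Rightarrow> bool" where
  "phylogenetic V E A \<longleftrightarrow> (\<exists>e0. valid_root_location V E A e0)"

text \<open>Biconnected components (blocks): classes of edges, two edges being in
  the same block iff they are equal or lie on a common simple cycle.\<close>
definition is_cycle :: "'a set set \<Rightarrow> 'a list \<Rightarrow> bool" where
  "is_cycle E cs \<longleftrightarrow> length cs \<ge> 3 \<and> distinct cs \<and>
     (\<forall>i < length cs. {cs ! i, cs ! ((i + 1) mod length cs)} \<in> E)"

definition cycle_edges :: "'a list \<Rightarrow> 'a set set" where
  "cycle_edges cs = {{cs ! i, cs ! ((i + 1) mod length cs)} | i. i < length cs}"

definition same_block :: "'a set set \<Rightarrow> 'a set \<Rightarrow> 'a set \<Rightarrow> bool" where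
  "same_block E e f \<longleftrightarrow> e = f \<or>
     (\<exists>cs. is_cycle E cs \<and> e \<in> cycle_edges cs \<and> f \<in> cycle_edges cs)"

definition block_vertices :: "'a set set \<Rightarrow> 'a set \<Rightarrow> 'a set" where
  "block_vertices E e = \<Union> {f \<in> E. same_block E e f}"

definition level1 :: "'a set set \<Rightarrow> ('a \<times> 'a) set \<Rightarrow> bool" where
  "level1 E A \<longleftrightarrow> (\<forall>e\<in>E. card {v \<in> block_vertices E e. is_retic A v} \<le> 1)"

definition network :: "'a set \<Rightarrow> 'a set set \<Rightarrow> ('a \<times> 'a) set \<Rightarrow> bool" where
  "network V E A \<longleftrightarrow> simple_graph V E \<and> graph_connected V E \<and>
     (\<forall>v\<in>V. deg E v = 1 \<or> deg E v = 3) \<and>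
     semi_directed E A \<and> phylogenetic V E A \<and> level1 E A"

definition out_leaf :: "'a set \<Rightarrow> 'a set set \<Rightarrow> ('a \<times> 'a) set \<Rightarrow> 'a \<Rightarrow> bool" where
  "out_leaf V E A x \<longleftrightarrow> x \<in> leaves V E \<and>
     (\<exists>v. is_retic A v \<and> {v, x} \<in> E \<and> (x, v) \<notin> A \<and> (v, x) \<notin> A)"

definition cut_edge :: "'a set \<Rightarrow> 'a set set \<Rightarrow> 'a set \<Rightarrow> bool" where
  "cut_edge V E e \<longleftrightarrow> e \<in> E \<and> \<not> graph_connected V (E - {e})"

definition tree_cherry ::
  "'a set \<Rightarrow> 'a set set \<Rightarrow> 'a \<Rightarrow> 'a \<Rightarrow> 'a \<Rightarrow> bool" where
  "tree_cherry V E v x y \<longleftrightarrow> v \<in> V \<and> x \<noteq> y \<and>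
     x \<in> leaves V E \<and> y \<in> leaves V E \<and> {v, x} \<in> E \<and> {v, y} \<in> E \<and>
     (\<exists>w. w \<notin> {x, y} \<and> cut_edge V E {v, w} \<and>
          {u \<in> V. (v, u) \<in> (adj (E - {{v, w}}))\<^sup>*} = {v, x, y})"

end

(* Orient the network away from a valid root location e0.  Then a vertex of
   degree 3 has in-degree 2 and one child if it is a reticulation, and
   in-degree 1 (counting the root edge) and two children otherwise, while a
   leaf is a childless tree vertex.  A leaf off the root edge has an internal
   parent, so by acyclicity there is a lowest internal vertex v, all of whose
   children are leaves.  If v is a reticulation, its child is an out leaf;
   otherwise its two children form a tree cherry with v, cut off by the edge
   to the third neighbour of v.  Three leaves suffice. *)

theory Submission
  imports Defs
begin

definition neighbours :: "'a set set \<Rightarrow> 'a \<Rightarrow> 'a set" where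
  "neighbours E v = {u. {v, u} \<in> E}"

lemma card_doubleton_partners:
  assumes "card e = 2"
  shows "card {u. {v, u} = e} = (if v \<in> e then 1 else 0)"
proof -
  obtain a b where e: "e = {a, b}" "a \<noteq> b"
    using assms card_2_iff by metis
  then have "{u. {v, u} = e} = (if v = a then {b} else if v = b then {a} else {})"
    by (auto simp: doubleton_eq_iff)
  then show ?thesis
    using e by auto
qed

context
  fixes V :: "'a set" and E :: "'a set set"
  assumes simple: "simple_graph V E"
begin

lemma edge_endpoints: "{u, v} \<in> E \<Longrightarrow> u \<in> V \<and> v \<in> V \<and> u \<noteq> v"
  using simple unfolding simple_graph_def by fastforce

lemma neighbours_subset: "neighbours E v \<subseteq> V"
  using edge_endpoints by (auto simp: neighbours_def)

lemma finite_neighbours: "finite (neighbours E v)"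
  using simple finite_subset[OF neighbours_subset] by (simp add: simple_graph_def)

lemma deg_eq_card_neighbours: "deg E v = card (neighbours E v)"
proof -
  have "bij_betw (\<lambda>u. {v, u}) (neighbours E v) {e \<in> E. v \<in> e}"
  proof (rule bij_betwI')
    fix e assume "e \<in> {e \<in> E. v \<in> e}"
    moreover obtain a b where "e = {a, b}"
      using calculation simple card_2_iff unfolding simple_graph_def by (metis (lifting) mem_Collect_eq)
    ultimately show "\<exists>u\<in>neighbours E v. e = {v, u}"
      by (auto simp: neighbours_def insert_commute)
  qed (auto simp: neighbours_def doubleton_eq_iff)
  then show ?thesis
    unfolding deg_def by (simp add: bij_betw_same_card)
qed

lemma leaf_neighbours:
  assumes "x \<in> leaves V E" and "v \<in> neighbours E x"
  shows "neighbours E x = {v}"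
  using assms deg_eq_card_neighbours
  by (simp add: leaves_def) (metis card_1_singleton_iff singletonD)

lemma tree_cherryI:
  assumes "v \<in> V" and "x \<noteq> y" and x: "x \<in> leaves V E" and y: "y \<in> leaves V E"
    and nbrs_v: "neighbours E v = {x, y, w}" and w: "w \<notin> {x, y}"
  shows "tree_cherry V E v x y"
proof -
  define E' where "E' = E - {{v, w}}"
  have vx: "{v, x} \<in> E" and vy: "{v, y} \<in> E" and vw: "{v, w} \<in> E"
    using nbrs_v by (auto simp: neighbours_def)
  have nbrs_x: "neighbours E x = {v}"
    using leaf_neighbours[OF x] vx by (simp add: neighbours_def insert_commute)
  have nbrs_y: "neighbours E y = {v}"
    using leaf_neighbours[OF y] vy by (simp add: neighbours_def insert_commute)
  have closed: "u \<in> {v, x, y}" if "(v, u) \<in> (adj E')\<^sup>*" for u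
    using that
  proof (induction rule: rtrancl_induct)
    case (step a b)
    then have "b \<in> neighbours E a" and "{a, b} \<noteq> {v, w}"
      by (auto simp: adj_def E'_def neighbours_def)
    with step.IH show ?case
      using nbrs_v nbrs_x nbrs_y by auto
  qed simp
  have "{v, x} \<noteq> {v, w}" and "{v, y} \<noteq> {v, w}"
    using w by (auto simp: doubleton_eq_iff)
  then have "(v, x) \<in> (adj E')\<^sup>*" and "(v, y) \<in> (adj E')\<^sup>*"
    using vx vy by (auto simp: adj_def E'_def)
  then have component: "{u \<in> V. (v, u) \<in> (adj E')\<^sup>*} = {v, x, y}"
    using closed \<open>v \<in> V\<close> x y by (auto simp: leaves_def)
  have "w \<in> V" and "w \<noteq> v"
    using edge_endpoints[OF vw] by auto
  moreover have "(v, w) \<notin> (adj E')\<^sup>*"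
    using closed w \<open>w \<noteq> v\<close> by blast
  ultimately have "cut_edge V E {v, w}"
    using vw \<open>v \<in> V\<close> unfolding cut_edge_def graph_connected_def E'_def by blast
  then show ?thesis
    using assms vx vy component unfolding tree_cherry_def E'_def by blast
qed

end

locale rooted_binary_network =
  fixes V :: "'a set" and E :: "'a set set" and A :: "('a \<times> 'a) set"
    and e0 :: "'a set" and D :: "('a \<times> 'a) set"
  assumes simple: "simple_graph V E"
    and deg_1_or_3: "\<forall>v\<in>V. deg E v = 1 \<or> deg E v = 3"
    and semi_directed: "semi_directed E A"
    and root_edge: "e0 \<in> E"
    and arcs_edges: "D \<subseteq> adj (E - {e0})"
    and edges_oriented: "\<forall>e\<in>E - {e0}. \<exists>u v. e = {u, v} \<and> (u, v) \<in> D"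
    and acyclic: "acyclic D"
    and retic_arcs: "A \<subseteq> D"
    and indeg_root: "v \<in> V \<Longrightarrow> indeg D v + (if v \<in> e0 then 1 else 0)
                           = (if is_retic A v then 2 else 1)"
begin

lemma arc_edge: "(u, v) \<in> D \<Longrightarrow> {u, v} \<in> E \<and> {u, v} \<noteq> e0"
  using arcs_edges by (auto simp: adj_def)

lemma arc_asym: "(u, v) \<in> D \<Longrightarrow> (v, u) \<notin> D"
  using acyclic unfolding acyclic_def by (meson r_into_trancl' trancl_into_trancl)

lemma finite_arcs: "finite D"
proof -
  have "D \<subseteq> V \<times> V"
    using arc_edge edge_endpoints[OF simple] by auto
  then show ?thesis
    using simple finite_subset by (auto simp: simple_graph_def)
qed

lemma neighbours_split:
  "neighbours E v = {u. (u, v) \<in> D} \<union> D `` {v} \<union> {u. {v, u} = e0}"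
proof (intro equalityI subsetI)
  fix u assume "u \<in> neighbours E v"
  then have "{v, u} \<in> E"
    by (simp add: neighbours_def)
  show "u \<in> {u. (u, v) \<in> D} \<union> D `` {v} \<union> {u. {v, u} = e0}"
  proof (cases "{v, u} = e0")
    case False
    then obtain p q where "{v, u} = {p, q}" "(p, q) \<in> D"
      using \<open>{v, u} \<in> E\<close> edges_oriented by blast
    then show ?thesis
      by (auto simp: doubleton_eq_iff)
  qed simp
next
  fix u assume "u \<in> {u. (u, v) \<in> D} \<union> D `` {v} \<union> {u. {v, u} = e0}"
  then have "{u, v} \<in> E \<or> {v, u} \<in> E"
    using arc_edge root_edge by blast
  then show "u \<in> neighbours E v"
    by (auto simp: neighbours_def insert_commute)
qed

lemma deg_eq_indeg_outdeg_root:
  "deg E v = indeg D v + card (D `` {v}) + (if v \<in> e0 then 1 else 0)"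
proof -
  have finite: "finite {u. (u, v) \<in> D}" "finite (D `` {v})" "finite {u. {v, u} = e0}"
    using finite_subset[OF _ finite_neighbours[OF simple]] neighbours_split by blast+
  have "{u. (u, v) \<in> D} \<inter> D `` {v} = {}"
    using arc_asym by blast
  moreover have "({u. (u, v) \<in> D} \<union> D `` {v}) \<inter> {u. {v, u} = e0} = {}"
    using arc_edge by (fastforce simp: insert_commute)
  moreover have "card e0 = 2"
    using simple root_edge by (simp add: simple_graph_def)
  ultimately show ?thesis
    using finite neighbours_split deg_eq_card_neighbours[OF simple]
    by (simp add: card_Un_disjoint card_doubleton_partners indeg_def)
qed

lemma deg_eq_outdeg:
  "v \<in> V \<Longrightarrow> deg E v = (if is_retic A v then 2 else 1) + card (D `` {v})"
  using indeg_root[of v] deg_eq_indeg_outdeg_root[of v] by simp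

lemma leaf_childless:
  assumes "x \<in> leaves V E"
  shows "\<not> is_retic A x" and "D `` {x} = {}"
proof -
  have "finite (D `` {x})"
    using finite_arcs by (rule finite_Image)
  moreover have "(if is_retic A x then 2 else 1) + card (D `` {x}) = 1"
    using assms deg_eq_outdeg[of x] by (simp add: leaves_def)
  ultimately show "\<not> is_retic A x" and "D `` {x} = {}"
    by (simp_all split: if_splits)
qed

text \<open>A leaf off the root edge has a parent, which cannot be a leaf.\<close>
lemma internal_vertex_exists:
  assumes "card (leaves V E) \<ge> 3"
  obtains u where "u \<in> V" and "deg E u = 3"
proof -
  have "card e0 = 2"
    using simple root_edge by (simp add: simple_graph_def)
  then have "finite e0"
    by (simp add: card_ge_0_finite)
  then have "\<not> leaves V E \<subseteq> e0"
    using assms card_mono[of e0 "leaves V E"] \<open>card e0 = 2\<close> by linarith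
  then obtain x where x: "x \<in> leaves V E" "x \<notin> e0"
    by blast
  then have "x \<in> V"
    by (simp add: leaves_def)
  then have "indeg D x = 1"
    using indeg_root[OF \<open>x \<in> V\<close>] x(2) leaf_childless(1)[OF x(1)] by simp
  then have "{u. (u, x) \<in> D} \<noteq> {}"
    unfolding indeg_def by (metis card.empty zero_neq_one)
  then obtain u where ux: "(u, x) \<in> D"
    by blast
  have "u \<in> V"
    using edge_endpoints[OF simple] arc_edge[OF ux] by blast
  moreover have "u \<notin> leaves V E"
    using leaf_childless(2) ux by blast
  ultimately show ?thesis
    using that deg_1_or_3 by (auto simp: leaves_def)
qed

lemma lowest_internal_vertex:
  assumes "u \<in> V" and "deg E u = 3"
  obtains v where "v \<in> V" and "deg E v = 3" and "D `` {v} \<subseteq> leaves V E"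
proof -
  define S where "S = {v \<in> V. deg E v = 3}"
  have "wf (D\<inverse>)"
    using finite_acyclic_wf_converse finite_arcs acyclic by blast
  then obtain v where "v \<in> S" and lowest: "\<And>z. (z, v) \<in> D\<inverse> \<Longrightarrow> z \<notin> S"
    using wfE_min[of "D\<inverse>" u S] assms S_def by blast
  have "D `` {v} \<subseteq> leaves V E"
  proof
    fix z assume "z \<in> D `` {v}"
    then have "z \<in> V" and "z \<notin> S"
      using lowest edge_endpoints[OF simple] arc_edge by blast+
    then show "z \<in> leaves V E"
      using deg_1_or_3 by (auto simp: S_def leaves_def)
  qed
  with \<open>v \<in> S\<close> that show ?thesis
    unfolding S_def by blast
qed

lemma out_leaf_below_lowest_retic:
  assumes "v \<in> V" and "deg E v = 3" and "is_retic A v" and "D `` {v} \<subseteq> leaves V E"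
  shows "\<exists>x. out_leaf V E A x"
proof -
  have "card (D `` {v}) = 1"
    using deg_eq_outdeg assms(1-3) by simp
  then obtain x where "D `` {v} = {x}"
    by (auto simp: card_1_singleton_iff)
  then have vx: "(v, x) \<in> D" and x: "x \<in> leaves V E"
    using assms(4) by auto
  have "(x, v) \<notin> A"
    using retic_arcs arc_asym[OF vx] by blast
  moreover have "(v, x) \<notin> A"
  proof
    assume "(v, x) \<in> A"
    then have "is_retic A x"
      using semi_directed unfolding semi_directed_def by blast
    with leaf_childless(1)[OF x] show False ..
  qed
  ultimately have "out_leaf V E A x"
    using x assms(3) arc_edge[OF vx] unfolding out_leaf_def by blast
  then show ?thesis ..
qed

lemma tree_cherry_at_lowest_tree_vertex:
  assumes "v \<in> V" and "deg E v = 3" and "\<not> is_retic A v" and "D `` {v} \<subseteq> leaves V E"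
  shows "\<exists>x y. tree_cherry V E v x y"
proof -
  have "card (D `` {v}) = 2"
    using deg_eq_outdeg assms(1-3) by simp
  then obtain x y where xy: "D `` {v} = {x, y}" "x \<noteq> y"
    by (auto simp: card_2_iff)
  have "{x, y} \<subseteq> neighbours E v"
    using xy neighbours_split by blast
  moreover have "card (neighbours E v) = 3"
    using assms(2) deg_eq_card_neighbours[OF simple] by simp
  ultimately have "card (neighbours E v - {x, y}) = 1"
    using xy(2) by (simp add: card_Diff_subset)
  then obtain w where "neighbours E v - {x, y} = {w}"
    by (auto simp: card_1_singleton_iff)
  then have "neighbours E v = {x, y, w}" and "w \<notin> {x, y}"
    using \<open>{x, y} \<subseteq> neighbours E v\<close> by auto
  moreover have "x \<in> leaves V E" and "y \<in> leaves V E"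
    using xy assms(4) by auto
  ultimately show ?thesis
    using tree_cherryI[OF simple \<open>v \<in> V\<close> \<open>x \<noteq> y\<close>] by blast
qed

theorem out_leaf_or_tree_cherry:
  assumes "card (leaves V E) \<ge> 3"
  shows "(\<exists>x. out_leaf V E A x) \<or> (\<exists>v x y. tree_cherry V E v x y)"
proof -
  obtain u where "u \<in> V" and "deg E u = 3"
    using internal_vertex_exists assms by blast
  then obtain v where "v \<in> V" and "deg E v = 3" and "D `` {v} \<subseteq> leaves V E"
    by (rule lowest_internal_vertex)
  then show ?thesis
    using out_leaf_below_lowest_retic tree_cherry_at_lowest_tree_vertex
    by (cases "is_retic A v") blast+
qed

end

theorem lemma1:
  fixes V :: "'a set" and E :: "'a set set" and A :: "('a \<times> 'a) set"
  assumes "network V E A"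
    and "card (leaves V E) \<ge> 4"
  shows "(\<exists>x. out_leaf V E A x) \<or> (\<exists>v x y. tree_cherry V E v x y)"
proof -
  from assms(1) obtain e0 where "valid_root_location V E A e0"
    unfolding network_def phylogenetic_def by blast
  then obtain D where "e0 \<in> E" and "D \<subseteq> adj (E - {e0})"
    and "\<forall>e\<in>E - {e0}. \<exists>u v. e = {u, v} \<and> (u, v) \<in> D" and "acyclic D" and "A \<subseteq> D"
    and "\<forall>v\<in>V. indeg D v + (if v \<in> e0 then 1 else 0) = (if is_retic A v then 2 else 1)"
    unfolding valid_root_location_def by (elim conjE exE) (rule that)
  with assms(1) interpret rooted_binary_network V E A e0 D
    by unfold_locales (simp_all add: network_def)
  show ?thesis
    using out_leaf_or_tree_cherry assms(2) by simp
qed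

end
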